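(* Let $(X,* )$ be an infinite compact metrizable group with identity $e$, and let $f\colon X\to X$ be a continuous group homomorphism which is transitive and satisfies $\overline{\mathcal M(f)}=X$. Let $S\subset X$ be a syndetically scrambled set for $f$ with $e\in S$, let $x\in\mathrm{Tran}(f)$, and put $T=S*x=\{a*x:a\in S\}$. Then: (i) $T$ is homeomorphic to $S$ and $T$ is syndetically scrambled for $f$; moreover, if $d$ is a two-sided invariant compatible metric on $X$ and $S$ is syndetically $\varepsilon$-scrambled with respect to $d$, then so is $T$; (ii) $T\subset\mathrm{Tran}(f)$, and for every $y\in T$ the orbit closure $\overline{\{f^n(y):n\ge0\}}$ contains infinitely many distinct minimal sets; (iii) $\mathrm{SProx}(f)(y)\cap\mathcal M(f)=\emptyset$ for every $y\in T$.
   Context: $X$ is a compact metric space, $f$ continuous. $\mathrm{Tran}(f)$ is the set of points with dense forward orbit; $f$ is transitive if for all nonempty open $U,V$ there is $n\in\mathbb N$ with $f^n(U)\cap V\ne\emptyset$. A minimal set is a nonempty closed $f$-invariant set with no proper nonempty closed invariant subset; $\mathcal M(f)$ is the set of points belonging to some minimal set. A metric $d$ is two-sided invariant if $d(a,b)=d(a*z,b*z)=d(z*a,z*b)$. Syndetic: a subset of $\mathbb N$ meeting every set containing arbitrarily long runs of consecutive integers. $\mathrm{Asy}(f)=\{(x,y):\lim_n d(f^n x,f^n y)=0\}$; $\mathrm{SProx}(f)=\{(x,y): \{n: d(f^nx,f^ny)<\varepsilon\}$ syndetic for all $\varepsilon>0\}$, and $\mathrm{SProx}(f)(y)=\{z:(y,z)\in\mathrm{SProx}(f)\}$.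 A set with at least two points is syndetically scrambled if all pairs of distinct points lie in $\mathrm{SProx}(f)\setminus\mathrm{Asy}(f)$; syndetically $\varepsilon$-scrambled if moreover $\limsup_n d(f^nx,f^ny)\ge\varepsilon$ for all distinct $x,y$ in it. *)

theory Defs
  imports "HOL-Analysis.Analysis"
begin

definition transitive_map :: "('a::topological_space \<Rightarrow> 'a) \<Rightarrow> bool" where
  "transitive_map f \<longleftrightarrow>
     (\<forall>U V. open U \<and> open V \<and> U \<noteq> {} \<and> V \<noteq> {} \<longrightarrow>
        (\<exists>n::nat. n \<ge> 1 \<and> (f ^^ n) ` U \<inter> V \<noteq> {}))"

definition forward_orbit :: "('a \<Rightarrow> 'a) \<Rightarrow> 'a \<Rightarrow> 'a set" where
  "forward_orbit f x = range (\<lambda>n. (f ^^ n) x)"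

definition Tran :: "('a::topological_space \<Rightarrow> 'a) \<Rightarrow> 'a set" where
  "Tran f = {x. closure (forward_orbit f x) = UNIV}"

definition minimal_set :: "('a::topological_space \<Rightarrow> 'a) \<Rightarrow> 'a set \<Rightarrow> bool" where
  "minimal_set f M \<longleftrightarrow> M \<noteq> {} \<and> closed M \<and> f ` M \<subseteq> M \<and>
     (\<forall>N. N \<subseteq> M \<and> N \<noteq> {} \<and> closed N \<and> f ` N \<subseteq> N \<longrightarrow> N = M)"

definition minimal_points :: "('a::topological_space \<Rightarrow> 'a) \<Rightarrow> 'a set" where
  "minimal_points f = \<Union>{M. minimal_set f M}"

definition syndetic :: "nat set \<Rightarrow> bool" where
  "syndetic A \<longleftrightarrow> (\<forall>B. (\<forall>L. \<exists>m. {m..<m+L} \<subseteq> B) \<longrightarrow> A \<inter> B \<noteq> {})"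

definition Asy :: "('a \<Rightarrow> 'a \<Rightarrow> real) \<Rightarrow> ('a \<Rightarrow> 'a) \<Rightarrow> ('a \<times> 'a) set" where
  "Asy d f = {(x, y). (\<lambda>n. d ((f ^^ n) x) ((f ^^ n) y)) \<longlonglongrightarrow> 0}"

definition SProx :: "('a \<Rightarrow> 'a \<Rightarrow> real) \<Rightarrow> ('a \<Rightarrow> 'a) \<Rightarrow> ('a \<times> 'a) set" where
  "SProx d f = {(x, y). \<forall>\<epsilon>>0. syndetic {n. d ((f ^^ n) x) ((f ^^ n) y) < \<epsilon>}}"

definition synd_scrambled :: "('a \<Rightarrow> 'a \<Rightarrow> real) \<Rightarrow> ('a \<Rightarrow> 'a) \<Rightarrow> 'a set \<Rightarrow> bool" where
  "synd_scrambled d f S \<longleftrightarrow> (\<exists>a\<in>S. \<exists>b\<in>S. a \<noteq> b) \<and>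
     (\<forall>x\<in>S. \<forall>y\<in>S. x \<noteq> y \<longrightarrow> (x, y) \<in> SProx d f - Asy d f)"

definition synd_eps_scrambled :: "('a \<Rightarrow> 'a \<Rightarrow> real) \<Rightarrow> ('a \<Rightarrow> 'a) \<Rightarrow> real \<Rightarrow> 'a set \<Rightarrow> bool" where
  "synd_eps_scrambled d f \<epsilon> S \<longleftrightarrow> synd_scrambled d f S \<and>
     (\<forall>x\<in>S. \<forall>y\<in>S. x \<noteq> y \<longrightarrow>
        limsup (\<lambda>n. ereal (d ((f ^^ n) x) ((f ^^ n) y))) \<ge> ereal \<epsilon>)"

definition compatible_metric :: "('a::topological_space \<Rightarrow> 'a \<Rightarrow> real) \<Rightarrow> bool" where
  "compatible_metric d \<longleftrightarrow>
     (\<forall>x y. d x y = 0 \<longleftrightarrow> x = y) \<and> (\<forall>x y. d x y = d y x) \<and>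
     (\<forall>x y z. d x z \<le> d x y + d y z) \<and>
     (\<forall>U. open U \<longleftrightarrow> (\<forall>x\<in>U. \<exists>r>0. \<forall>y. d x y < r \<longrightarrow> y \<in> U))"

definition two_sided_invariant :: "('a::plus \<Rightarrow> 'a \<Rightarrow> real) \<Rightarrow> bool" where
  "two_sided_invariant d \<longleftrightarrow> (\<forall>a b z. d a b = d (a + z) (b + z) \<and> d a b = d (z + a) (z + b))"

end

theory Submission
  imports Defs
begin

(*
  First, right translation a \<mapsto> a + x commutes with the dynamics up to the
  translation itself: f^n(a + x) = f^n a + f^n x.  By compactness, translations
  are uniformly equicontinuous, so syndetic proximality and asymptoticity are
  preserved by translation; for a two-sided invariant metric the distances are even
  unchanged.  This gives part (i).

  Second, a recurrence principle: if an orbit of a continuous map h on a compact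
  space is syndetically close to a quantity g (i.e. g(h^n w) < \<epsilon> along a syndetic
  set for every \<epsilon> > 0), then every compact h-invariant set K meeting the orbit closure
  of w contains a point of that orbit closure where g \<le> 0; otherwise the orbit would
  spend arbitrarily long stretches of time in {g > \<delta>}.  Applied to the product map
  f \<times> f, this shows:
   - if (0, a) is syndetically proximal and x is transitive, then every minimal set
     meets, hence lies in, the orbit closure of a + x, so a + x is transitive (ii);
   - a transitive point is never syndetically proximal to a point of a minimal set,
     as soon as there is a second minimal set (iii).
  Finally, density of the minimal points in an infinite space together with the
  fixed point 0 forces infinitely many minimal sets, which completes (ii) and (iii).
*)

subsection \<open>Iterates and orbit closures\<close>

lemma funpow_map_prod:
  "(map_prod (f :: 'b \<Rightarrow> 'b) (g :: 'c \<Rightarrow> 'c) ^^ n) (u, v) = ((f ^^ n) u, (g ^^ n) v)"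
  by (induction n) (simp_all add: funpow.simps)

lemma continuous_on_funpow:
  fixes h :: "'b::topological_space \<Rightarrow> 'b"
  assumes "continuous_on UNIV h"
  shows "continuous_on UNIV (h ^^ n)"
proof (induction n)
  case (Suc n)
  then show ?case
    using continuous_on_compose2[OF assms Suc] by (simp add: o_def)
qed (simp add: continuous_on_id)

lemma continuous_on_map_prod:
  fixes f :: "'b::topological_space \<Rightarrow> 'c::topological_space"
    and g :: "'d::topological_space \<Rightarrow> 'e::topological_space"
  assumes "continuous_on UNIV f" "continuous_on UNIV g"
  shows "continuous_on UNIV (map_prod f g)"
proof -
  have "continuous_on UNIV (\<lambda>p. (f (fst p), g (snd p)))"
    by (intro continuous_on_Pair continuous_on_compose2[OF assms(1)]
        continuous_on_compose2[OF assms(2)] continuous_intros) auto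
  then show ?thesis by (simp add: map_prod_def case_prod_beta')
qed

lemma funpow_in_invariant: "h ` M \<subseteq> M \<Longrightarrow> w \<in> M \<Longrightarrow> (h ^^ n) w \<in> M"
  by (induction n) auto

lemma orbit_closure_invariant:
  fixes h :: "'b::topological_space \<Rightarrow> 'b"
  assumes "continuous_on UNIV h"
  shows "h ` closure (forward_orbit h w) \<subseteq> closure (forward_orbit h w)"
proof (rule image_closure_subset)
  have "h ((h ^^ n) w) \<in> forward_orbit h w" for n
    unfolding forward_orbit_def using rangeI[of "\<lambda>n. (h ^^ n) w" "Suc n"] by simp
  then show "h ` forward_orbit h w \<subseteq> closure (forward_orbit h w)"
    using closure_subset unfolding forward_orbit_def by blast
  show "continuous_on (closure (forward_orbit h w)) h"
    using assms by (rule continuous_on_subset) simp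
qed simp

lemma orbit_closure_least:
  assumes "closed M" "h ` M \<subseteq> M" "w \<in> M"
  shows "closure (forward_orbit h w) \<subseteq> M"
  using assms funpow_in_invariant[OF assms(2,3)]
  by (intro closure_minimal) (auto simp: forward_orbit_def)

lemma orbit_closure_factor:
  fixes h :: "'b::topological_space \<Rightarrow> 'b" and p :: "'b \<Rightarrow> 'c::t2_space"
  assumes compact: "compact (UNIV :: 'b set)" and cont: "continuous_on UNIV p"
    and semiconj: "\<And>y. p (h y) = k (p y)"
  shows "p ` closure (forward_orbit h w) = closure (forward_orbit k (p w))"
proof
  have iter: "p ((h ^^ n) w) = (k ^^ n) (p w)" for n
    by (induction n) (simp_all add: semiconj)
  then have orbit: "p ` forward_orbit h w = forward_orbit k (p w)"
    unfolding forward_orbit_def by (auto simp: image_image)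
  have cont_cl: "continuous_on (closure (forward_orbit h w)) p"
    using cont by (rule continuous_on_subset) simp
  show "p ` closure (forward_orbit h w) \<subseteq> closure (forward_orbit k (p w))"
    unfolding orbit[symmetric] using cont_cl by (rule image_closure_subset) (simp_all add: closure_subset)
  have "compact (closure (forward_orbit h w))"
    using compact by (simp add: closed_Int_compact[of _ UNIV, simplified])
  then have "closed (p ` closure (forward_orbit h w))"
    using cont_cl by (intro compact_imp_closed compact_continuous_image)
  then show "closure (forward_orbit k (p w)) \<subseteq> p ` closure (forward_orbit h w)"
    unfolding orbit[symmetric] using closure_subset by (intro closure_minimal image_mono) auto
qed

lemma minimal_set_subset:
  assumes M: "minimal_set f M" and C: "closed C" "f ` C \<subseteq> C" and meet: "M \<inter> C \<noteq> {}"
  shows "M \<subseteq> C"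
proof -
  have "closed (M \<inter> C)" "f ` (M \<inter> C) \<subseteq> M \<inter> C"
    using M C unfolding minimal_set_def by auto
  then have "M \<inter> C = M"
    using M meet unfolding minimal_set_def by blast
  then show ?thesis by blast
qed

lemma minimal_sets_disjoint:
  assumes "minimal_set f M" "minimal_set f M'" "M \<noteq> M'"
  shows "M \<inter> M' = {}"
proof (rule ccontr)
  assume meet: "M \<inter> M' \<noteq> {}"
  have "M \<subseteq> M'"
    using assms(2) meet by (intro minimal_set_subset[OF assms(1)]) (auto simp: minimal_set_def)
  moreover have "M' \<subseteq> M"
    using assms(1) meet by (intro minimal_set_subset[OF assms(2)]) (auto simp: minimal_set_def)
  ultimately show False using assms(3) by blast
qed

subsection \<open>Syndetic proximality and invariant sets\<close>

lemma thick_visits: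
  fixes h :: "'b::topological_space \<Rightarrow> 'b"
  assumes h: "continuous_on UNIV h" and inv: "h ` K \<subseteq> K" and U: "open U" "K \<subseteq> U"
    and k: "k \<in> K" "k \<in> closure (forward_orbit h w)"
  shows "\<forall>L. \<exists>m. {m..<m+L} \<subseteq> {n. (h ^^ n) w \<in> U}"
proof
  fix L :: nat
  define V where "V = (\<Inter>j<L. (h ^^ j) -` U)"
  have "open V" unfolding V_def
    by (intro open_INT) (auto intro!: open_vimage U continuous_on_funpow h)
  moreover have "k \<in> V" unfolding V_def using funpow_in_invariant[OF inv k(1)] U by auto
  ultimately obtain m where m: "(h ^^ m) w \<in> V"
    using k(2) open_Int_closure_eq_empty[of V "forward_orbit h w"]
    unfolding forward_orbit_def by auto
  have "{m..<m+L} \<subseteq> {n. (h ^^ n) w \<in> U}"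
  proof
    fix i assume "i \<in> {m..<m+L}"
    then have "i - m < L" "i = (i - m) + m" by auto
    then have "i - m < L" "(h ^^ i) w = (h ^^ (i - m)) ((h ^^ m) w)"
      by (metis funpow_add comp_apply)+
    then show "i \<in> {n. (h ^^ n) w \<in> U}" using m unfolding V_def by auto
  qed
  then show "\<exists>m. {m..<m+L} \<subseteq> {n. (h ^^ n) w \<in> U}" by blast
qed

lemma syndetically_small_on_invariant_set:
  fixes h :: "'b::topological_space \<Rightarrow> 'b" and g :: "'b \<Rightarrow> real"
  assumes h: "continuous_on UNIV h" and g: "continuous_on UNIV g"
    and K: "compact K" "h ` K \<subseteq> K" "K \<inter> closure (forward_orbit h w) \<noteq> {}"
    and small: "\<And>\<epsilon>. \<epsilon> > 0 \<Longrightarrow> syndetic {n. g ((h ^^ n) w) < \<epsilon>}"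
  shows "\<exists>k \<in> K \<inter> closure (forward_orbit h w). g k \<le> 0"
proof (rule ccontr)
  define K' where "K' = K \<inter> closure (forward_orbit h w)"
  assume "\<not> (\<exists>k \<in> K \<inter> closure (forward_orbit h w). g k \<le> 0)"
  then have pos: "g k > 0" if "k \<in> K'" for k
    using that unfolding K'_def by force
  have K'_inv: "h ` K' \<subseteq> K'"
    unfolding K'_def using K(2) orbit_closure_invariant[OF h] by blast
  have "compact K'" unfolding K'_def using K(1) by (simp add: compact_Int_closed)
  moreover have "K' \<noteq> {}" unfolding K'_def using K(3) .
  ultimately have "\<exists>k0\<in>K'. \<forall>k\<in>K'. g k0 \<le> g k"
    using continuous_attains_inf continuous_on_subset[OF g subset_UNIV] by blast
  then obtain k0 where k0: "k0 \<in> K'" "\<And>k. k \<in> K' \<Longrightarrow> g k0 \<le> g k" by blast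
  define \<delta> where "\<delta> = g k0"
  have "\<delta> > 0" unfolding \<delta>_def using pos[OF k0(1)] .
  define U where "U = {y. \<delta> / 2 < g y}"
  have "open U" unfolding U_def by (intro open_Collect_less g continuous_intros)
  moreover have "K' \<subseteq> U" unfolding U_def \<delta>_def using k0 pos by fastforce
  ultimately have "\<forall>L. \<exists>m. {m..<m+L} \<subseteq> {n. (h ^^ n) w \<in> U}"
    using thick_visits[OF h K'_inv] k0(1) unfolding K'_def by blast
  moreover have "syndetic {n. g ((h ^^ n) w) < \<delta> / 2}"
    by (rule small) (use \<open>\<delta> > 0\<close> in simp)
  ultimately obtain n where "g ((h ^^ n) w) < \<delta> / 2" "(h ^^ n) w \<in> U"
    unfolding syndetic_def by blast
  then show False unfolding U_def by simp
qed

subsection \<open>Translations in a compact group\<close>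

lemma additive_funpow:
  fixes f :: "'a::group_add \<Rightarrow> 'a"
  assumes hom: "\<And>a b. f (a + b) = f a + f b"
  shows "(f ^^ n) (a + b) = (f ^^ n) a + (f ^^ n) b"
  by (induction n) (simp_all add: hom)

lemma additive_zero:
  fixes f :: "'a::group_add \<Rightarrow> 'a"
  assumes hom: "\<And>a b. f (a + b) = f a + f b"
  shows "f 0 = 0"
proof -
  have "f 0 + f 0 = f (0 + 0)" by (rule hom[symmetric])
  also have "\<dots> = f 0 + 0" by simp
  finally show "f 0 = 0" by (rule add_left_imp_eq)
qed

lemma additive_funpow_zero:
  fixes f :: "'a::group_add \<Rightarrow> 'a"
  assumes hom: "\<And>a b. f (a + b) = f a + f b"
  shows "(f ^^ n) 0 = 0"
  by (induction n) (simp_all add: additive_zero[OF hom])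

lemma continuous_on_right_translation:
  fixes c :: "'a::{topological_space, plus}"
  assumes "continuous_on UNIV (\<lambda>p :: 'a \<times> 'a. fst p + snd p)"
  shows "continuous_on UNIV (\<lambda>a. a + c)"
  using continuous_on_compose2[OF assms continuous_on_Pair[OF continuous_on_id continuous_on_const]]
  by simp

lemma homeomorphic_right_translation:
  fixes S :: "'a::{topological_space, group_add} set"
  assumes cont_add: "continuous_on UNIV (\<lambda>p :: 'a \<times> 'a. fst p + snd p)"
  shows "S homeomorphic ((\<lambda>a. a + c) ` S)"
proof -
  have "continuous_on S (\<lambda>a. a + c)" "continuous_on ((\<lambda>a. a + c) ` S) (\<lambda>b. b + - c)"
    by (rule continuous_on_subset[OF continuous_on_right_translation[OF cont_add]], simp)+
  then have "homeomorphism S ((\<lambda>a. a + c) ` S) (\<lambda>a. a + c) (\<lambda>b. b + - c)"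
    unfolding homeomorphism_def image_image by (simp add: add.assoc)
  then show ?thesis unfolding homeomorphic_def by blast
qed

lemma right_translations_equicontinuous:
  fixes e :: real
  assumes compact: "compact (UNIV :: 'a::{metric_space, plus} set)"
    and cont_add: "continuous_on UNIV (\<lambda>p :: 'a \<times> 'a. fst p + snd p)"
    and "e > 0"
  obtains d where "d > 0" "\<And>u v w :: 'a. dist u v < d \<Longrightarrow> dist (u + w) (v + w) < e"
proof -
  have "uniformly_continuous_on UNIV (\<lambda>p :: 'a \<times> 'a. fst p + snd p)"
    using compact_uniformly_continuous[OF cont_add] compact_Times[OF compact compact] by simp
  from uniformly_continuous_onE[OF this \<open>e > 0\<close>]
  obtain d where "d > 0" and d: "\<And>p q :: 'a \<times> 'a. p \<in> UNIV \<Longrightarrow> q \<in> UNIV \<Longrightarrow>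
      dist q p < d \<Longrightarrow> dist (fst q + snd q) (fst p + snd p) < e"
    by blast
  show ?thesis
  proof (rule that[OF \<open>d > 0\<close>])
    fix u v w :: 'a assume "dist u v < d"
    then have "dist (u, w) (v, w) < d" by (simp add: dist_Pair_Pair)
    from d[OF UNIV_I UNIV_I this] show "dist (u + w) (v + w) < e" by simp
  qed
qed

lemma translated_orbits_close:
  fixes f :: "'a::{metric_space, group_add} \<Rightarrow> 'a" and e :: real
  assumes compact: "compact (UNIV :: 'a set)"
    and cont_add: "continuous_on UNIV (\<lambda>p :: 'a \<times> 'a. fst p + snd p)"
    and hom: "\<And>a b. f (a + b) = f a + f b"
    and "e > 0"
  obtains d where "d > 0"
    "\<And>n a b c. dist ((f ^^ n) a) ((f ^^ n) b) < d \<Longrightarrow> dist ((f ^^ n) (a + c)) ((f ^^ n) (b + c)) < e"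
proof -
  obtain d where "d > 0" and d: "\<And>u v w :: 'a. dist u v < d \<Longrightarrow> dist (u + w) (v + w) < e"
    by (erule right_translations_equicontinuous[OF compact cont_add \<open>e > 0\<close>])
  show ?thesis
  proof (rule that[OF \<open>d > 0\<close>])
    fix n a b c assume "dist ((f ^^ n) a) ((f ^^ n) b) < d"
    from d[OF this, of "(f ^^ n) c"]
    show "dist ((f ^^ n) (a + c)) ((f ^^ n) (b + c)) < e" by (simp only: additive_funpow[OF hom])
  qed
qed

lemma syndetic_mono: "syndetic A \<Longrightarrow> A \<subseteq> B \<Longrightarrow> syndetic B"
  unfolding syndetic_def by blast

lemma sprox_right_translation:
  fixes f :: "'a::{metric_space, group_add} \<Rightarrow> 'a"
  assumes compact: "compact (UNIV :: 'a set)"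
    and cont_add: "continuous_on UNIV (\<lambda>p :: 'a \<times> 'a. fst p + snd p)"
    and hom: "\<And>a b. f (a + b) = f a + f b"
    and prox: "(a, b) \<in> SProx dist f"
  shows "(a + c, b + c) \<in> SProx dist f"
  unfolding SProx_def
proof (clarify)
  fix e :: real assume "e > 0"
  obtain d where "d > 0" and d:
    "\<And>n a b c. dist ((f ^^ n) a) ((f ^^ n) b) < d \<Longrightarrow> dist ((f ^^ n) (a + c)) ((f ^^ n) (b + c)) < e"
    by (erule translated_orbits_close[OF compact cont_add hom \<open>e > 0\<close>])
  have "syndetic {n. dist ((f ^^ n) a) ((f ^^ n) b) < d}"
    using prox \<open>d > 0\<close> unfolding SProx_def by blast
  then show "syndetic {n. dist ((f ^^ n) (a + c)) ((f ^^ n) (b + c)) < e}"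
    by (rule syndetic_mono) (auto intro: d)
qed

lemma asy_right_translation:
  fixes f :: "'a::{metric_space, group_add} \<Rightarrow> 'a"
  assumes compact: "compact (UNIV :: 'a set)"
    and cont_add: "continuous_on UNIV (\<lambda>p :: 'a \<times> 'a. fst p + snd p)"
    and hom: "\<And>a b. f (a + b) = f a + f b"
    and asy: "(a, b) \<in> Asy dist f"
  shows "(a + c, b + c) \<in> Asy dist f"
proof -
  have close: "eventually (\<lambda>n. dist ((f ^^ n) a) ((f ^^ n) b) < d) sequentially" if "d > 0" for d
    using asy that unfolding Asy_def tendsto_iff by (simp add: dist_real_def)
  have "eventually (\<lambda>n. dist ((f ^^ n) (a + c)) ((f ^^ n) (b + c)) < e) sequentially"
    if "e > 0" for e
  proof -
    obtain d where "d > 0" and d: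
      "\<And>n a b c. dist ((f ^^ n) a) ((f ^^ n) b) < d \<Longrightarrow> dist ((f ^^ n) (a + c)) ((f ^^ n) (b + c)) < e"
      by (erule translated_orbits_close[OF compact cont_add hom \<open>e > 0\<close>])
    show ?thesis
      using close[OF \<open>d > 0\<close>] by (rule eventually_mono) (rule d)
  qed
  then show ?thesis unfolding Asy_def tendsto_iff by (simp add: dist_real_def)
qed

lemma synd_scrambled_image:
  assumes inj: "inj_on g S" and scr: "synd_scrambled d f S"
    and pairs: "\<And>a b. a \<in> S \<Longrightarrow> b \<in> S \<Longrightarrow> a \<noteq> b \<Longrightarrow> (a, b) \<in> SProx d f - Asy d f
      \<Longrightarrow> (g a, g b) \<in> SProx d f - Asy d f"
  shows "synd_scrambled d f (g ` S)"
  unfolding synd_scrambled_def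
proof (intro conjI ballI impI)
  obtain a b where "a \<in> S" "b \<in> S" "a \<noteq> b" using scr unfolding synd_scrambled_def by blast
  then show "\<exists>y\<in>g ` S. \<exists>z\<in>g ` S. y \<noteq> z" using inj by (metis image_eqI inj_on_contraD)
next
  fix y z assume "y \<in> g ` S" "z \<in> g ` S" "y \<noteq> z"
  then obtain a b where ab: "a \<in> S" "b \<in> S" "y = g a" "z = g b" "a \<noteq> b" by blast
  then have "(a, b) \<in> SProx d f - Asy d f" using scr unfolding synd_scrambled_def by blast
  with ab pairs show "(y, z) \<in> SProx d f - Asy d f" by blast
qed

lemma synd_scrambled_right_translation:
  fixes f :: "'a::{metric_space, group_add} \<Rightarrow> 'a"
  assumes compact: "compact (UNIV :: 'a set)"
    and cont_add: "continuous_on UNIV (\<lambda>p :: 'a \<times> 'a. fst p + snd p)"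
    and hom: "\<And>a b. f (a + b) = f a + f b"
    and scr: "synd_scrambled dist f S"
  shows "synd_scrambled dist f ((\<lambda>a. a + c) ` S)"
proof (rule synd_scrambled_image[OF _ scr])
  show "inj_on (\<lambda>a. a + c) S" by (simp add: inj_on_def)
next
  fix a b assume "(a, b) \<in> SProx dist f - Asy dist f"
  then have ab: "(a, b) \<in> SProx dist f" "(a, b) \<notin> Asy dist f" by auto
  have "(a + c, b + c) \<notin> Asy dist f"
  proof
    assume "(a + c, b + c) \<in> Asy dist f"
    from asy_right_translation[OF compact cont_add hom this, of "- c"]
    have "(a, b) \<in> Asy dist f" by (simp add: add.assoc)
    with ab(2) show False ..
  qed
  with sprox_right_translation[OF compact cont_add hom ab(1)]
  show "(a + c, b + c) \<in> SProx dist f - Asy dist f" by blast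
qed

text \<open>For a two-sided invariant metric, translation does not change any distance along
  orbits, so the scrambling constant is preserved as well.\<close>
lemma synd_eps_scrambled_right_translation:
  fixes f :: "'a::group_add \<Rightarrow> 'a" and d :: "'a \<Rightarrow> 'a \<Rightarrow> real"
  assumes hom: "\<And>a b. f (a + b) = f a + f b"
    and inv: "two_sided_invariant d"
    and scr: "synd_eps_scrambled d f \<epsilon> S"
  shows "synd_eps_scrambled d f \<epsilon> ((\<lambda>a. a + c) ` S)"
proof -
  have shift: "d (u + w) (v + w) = d u v" for u v w
    using inv unfolding two_sided_invariant_def by simp
  have same: "d ((f ^^ n) (a + c)) ((f ^^ n) (b + c)) = d ((f ^^ n) a) ((f ^^ n) b)" for n a b
    unfolding additive_funpow[OF hom] by (rule shift)
  have "synd_scrambled d f ((\<lambda>a. a + c) ` S)"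
  proof (rule synd_scrambled_image)
    show "synd_scrambled d f S" using scr unfolding synd_eps_scrambled_def by blast
    fix a b assume "(a, b) \<in> SProx d f - Asy d f"
    then show "(a + c, b + c) \<in> SProx d f - Asy d f"
      unfolding SProx_def Asy_def by (simp add: same)
  qed (simp add: inj_on_def)
  moreover have "limsup (\<lambda>n. ereal (d ((f ^^ n) y) ((f ^^ n) z))) \<ge> ereal \<epsilon>"
    if yz: "y \<in> (\<lambda>a. a + c) ` S" "z \<in> (\<lambda>a. a + c) ` S" "y \<noteq> z" for y z
  proof -
    obtain a b where "a \<in> S" "b \<in> S" "y = a + c" "z = b + c" "a \<noteq> b" using yz by blast
    then show ?thesis using scr unfolding synd_eps_scrambled_def by (simp add: same)
  qed
  ultimately show ?thesis unfolding synd_eps_scrambled_def by blast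
qed

subsection \<open>Transitive points and minimal sets\<close>

text \<open>Along
  the orbit of (a, x) under f \<times> f the first coordinate is syndetically close to 0, so every
  minimal set M contains a point m with (0, m) in the orbit closure of (a, x); adding the
  coordinates shows that m, hence M, lies in the orbit closure of a + x.\<close>
lemma transitive_right_translation:
  fixes f :: "'a::{metric_space, group_add} \<Rightarrow> 'a"
  assumes compact: "compact (UNIV :: 'a set)"
    and cont_add: "continuous_on UNIV (\<lambda>p :: 'a \<times> 'a. fst p + snd p)"
    and cont_f: "continuous_on UNIV f"
    and hom: "\<And>a b. f (a + b) = f a + f b"
    and dense_M: "closure (minimal_points f) = UNIV"
    and x_tran: "x \<in> Tran f"
    and prox: "(0, a) \<in> SProx dist f"
  shows "a + x \<in> Tran f"
proof -
  define F where "F = map_prod f f"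
  define W where "W = closure (forward_orbit F (a, x))"
  define C where "C = closure (forward_orbit f (a + x))"
  have compact2: "compact (UNIV :: ('a \<times> 'a) set)"
    using compact_Times[OF compact compact] by simp
  have cont_F: "continuous_on UNIV F"
    unfolding F_def using cont_f cont_f by (rule continuous_on_map_prod)
  have cont_snd: "continuous_on UNIV (snd :: 'a \<times> 'a \<Rightarrow> 'a)"
    by (intro continuous_intros)
  have "(\<lambda>p. fst p + snd p) ` W = closure (forward_orbit f (fst (a, x) + snd (a, x)))"
    unfolding W_def by (rule orbit_closure_factor[OF compact2 cont_add]) (simp add: F_def hom)
  then have "(\<lambda>p. fst p + snd p) ` W = C" unfolding C_def by simp
  then have sum_in_C: "fst p + snd p \<in> C" if "p \<in> W" for p
    using that by blast
  have "snd ` W = closure (forward_orbit f (snd (a, x)))"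
    unfolding W_def by (rule orbit_closure_factor[OF compact2 cont_snd]) (simp add: F_def)
  then have snd_W: "snd ` W = UNIV" using x_tran unfolding Tran_def by simp
  have small: "syndetic {n. dist 0 (fst ((F ^^ n) (a, x))) < \<epsilon>}" if "\<epsilon> > 0" for \<epsilon>
    using prox that unfolding SProx_def
    by (simp add: F_def funpow_map_prod additive_funpow_zero[OF hom])
  have "M \<subseteq> C" if M: "minimal_set f M" for M
  proof -
    have "closed M" "f ` M \<subseteq> M" "M \<noteq> {}" using M unfolding minimal_set_def by auto
    have K_compact: "compact ((UNIV :: 'a set) \<times> M)"
      using compact_Times[OF compact compact_Int_closed[OF compact \<open>closed M\<close>]] by simp
    have K_inv: "F ` (UNIV \<times> M) \<subseteq> UNIV \<times> M" using \<open>f ` M \<subseteq> M\<close> by (auto simp: F_def)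
    have K_meets: "(UNIV \<times> M) \<inter> W \<noteq> {}"
    proof -
      obtain m where "m \<in> M" using \<open>M \<noteq> {}\<close> by blast
      moreover obtain p where "p \<in> W" "snd p = m" using snd_W by (metis UNIV_I imageE)
      ultimately show ?thesis by (metis IntI SigmaI UNIV_I empty_iff prod.collapse)
    qed
    have "continuous_on UNIV (\<lambda>p :: 'a \<times> 'a. dist 0 (fst p))" by (intro continuous_intros)
    from syndetically_small_on_invariant_set[OF cont_F this K_compact K_inv K_meets[unfolded W_def] small]
    obtain p where p: "p \<in> (UNIV \<times> M) \<inter> W" "dist 0 (fst p) \<le> 0"
      unfolding W_def by blast
    then have "snd p \<in> M \<inter> C" using sum_in_C[of p] by (auto simp: mem_Times_iff)
    then show "M \<subseteq> C"
      using minimal_set_subset[OF M] orbit_closure_invariant[OF cont_f] unfolding C_def by blast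
  qed
  then have "closure (minimal_points f) \<subseteq> C"
    unfolding minimal_points_def C_def by (intro closure_minimal) auto
  then show ?thesis using dense_M unfolding Tran_def C_def by auto
qed

text \<open>A transitive point is never syndetically proximal to a point z of a minimal set M
  when a second minimal set M' exists: the orbit closure of (y, z) under f \<times> f meets
  M' \<times> M, where the two coordinates stay a positive distance apart.\<close>
lemma transitive_point_not_sprox_minimal:
  fixes f :: "'a::metric_space \<Rightarrow> 'a"
  assumes compact: "compact (UNIV :: 'a set)"
    and cont_f: "continuous_on UNIV f"
    and y_tran: "y \<in> Tran f"
    and M: "minimal_set f M" and M': "minimal_set f M'" "M' \<noteq> M"
    and z: "z \<in> M"
  shows "(y, z) \<notin> SProx dist f"
proof
  assume prox: "(y, z) \<in> SProx dist f"
  define F where "F = map_prod f f"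
  define W where "W = closure (forward_orbit F (y, z))"
  have compact2: "compact (UNIV :: ('a \<times> 'a) set)"
    using compact_Times[OF compact compact] by simp
  have cont_F: "continuous_on UNIV F"
    unfolding F_def using cont_f cont_f by (rule continuous_on_map_prod)
  have cont_fst: "continuous_on UNIV (fst :: 'a \<times> 'a \<Rightarrow> 'a)"
    and cont_snd: "continuous_on UNIV (snd :: 'a \<times> 'a \<Rightarrow> 'a)"
    by (intro continuous_intros)+
  have "fst ` W = closure (forward_orbit f (fst (y, z)))"
    unfolding W_def by (rule orbit_closure_factor[OF compact2 cont_fst]) (simp add: F_def)
  then have fst_W: "fst ` W = UNIV" using y_tran unfolding Tran_def by simp
  have "snd ` W = closure (forward_orbit f (snd (y, z)))"
    unfolding W_def by (rule orbit_closure_factor[OF compact2 cont_snd]) (simp add: F_def)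
  also have "\<dots> \<subseteq> M"
    using M z unfolding minimal_set_def by (intro orbit_closure_least) auto
  finally have snd_W: "snd ` W \<subseteq> M" .
  have "closed M" "closed M'" "f ` M \<subseteq> M" "f ` M' \<subseteq> M'" "M' \<noteq> {}"
    using M M' unfolding minimal_set_def by auto
  have K_compact: "compact (M' \<times> M)"
    using compact_Int_closed[OF compact \<open>closed M'\<close>] compact_Int_closed[OF compact \<open>closed M\<close>]
    by (simp add: compact_Times)
  have K_inv: "F ` (M' \<times> M) \<subseteq> M' \<times> M"
    using \<open>f ` M \<subseteq> M\<close> \<open>f ` M' \<subseteq> M'\<close> by (auto simp: F_def)
  have K_meets: "(M' \<times> M) \<inter> W \<noteq> {}"
  proof -
    obtain m' where "m' \<in> M'" using \<open>M' \<noteq> {}\<close> by blast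
    moreover obtain p where "p \<in> W" "fst p = m'" using fst_W by (metis UNIV_I imageE)
    ultimately show ?thesis using snd_W by (metis IntI SigmaI empty_iff image_subset_iff prod.collapse)
  qed
  have small: "syndetic {n. dist (fst ((F ^^ n) (y, z))) (snd ((F ^^ n) (y, z))) < \<epsilon>}"
    if "\<epsilon> > 0" for \<epsilon>
    using prox that unfolding SProx_def by (simp add: F_def funpow_map_prod)
  have "continuous_on UNIV (\<lambda>p :: 'a \<times> 'a. dist (fst p) (snd p))" by (intro continuous_intros)
  from syndetically_small_on_invariant_set[OF cont_F this K_compact K_inv K_meets[unfolded W_def] small]
  obtain p where "p \<in> M' \<times> M" "dist (fst p) (snd p) \<le> 0" by blast
  then have "fst p \<in> M' \<inter> M" by auto
  with minimal_sets_disjoint[OF M'(1) M M'(2)] show False by blast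
qed

lemma transitive_point_sprox_avoids_minimal_points:
  fixes f :: "'a::metric_space \<Rightarrow> 'a"
  assumes compact: "compact (UNIV :: 'a set)"
    and cont_f: "continuous_on UNIV f"
    and y_tran: "y \<in> Tran f"
    and infinite_M: "infinite {M. minimal_set f M}"
  shows "{z. (y, z) \<in> SProx dist f} \<inter> minimal_points f = {}"
proof -
  have "(y, z) \<notin> SProx dist f" if z: "z \<in> minimal_points f" for z
  proof -
    obtain M where M: "minimal_set f M" "z \<in> M" using z unfolding minimal_points_def by blast
    have "{M. minimal_set f M} \<noteq> {M}" using infinite_M by auto
    then obtain M' where "minimal_set f M'" "M' \<noteq> M" using M(1) by blast
    then show ?thesis
      by (rule transitive_point_not_sprox_minimal[OF compact cont_f y_tran M(1) _ _ M(2)])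
  qed
  then show ?thesis by blast
qed

text \<open>Density of minimal points forces infinitely many minimal sets: otherwise the minimal
  points form a closed, hence the whole, space, so a transitive point lies in a minimal set,
  which must then be the whole space; but the fixed point 0 is a minimal set by itself.\<close>
lemma infinitely_many_minimal_sets:
  fixes f :: "'a::{t1_space, group_add} \<Rightarrow> 'a"
  assumes infinite: "infinite (UNIV :: 'a set)"
    and hom: "\<And>a b. f (a + b) = f a + f b"
    and dense_M: "closure (minimal_points f) = UNIV"
    and x_tran: "x \<in> Tran f"
  shows "infinite {M. minimal_set f M}"
proof
  assume "finite {M. minimal_set f M}"
  moreover have "\<forall>M \<in> {M. minimal_set f M}. closed M" by (simp add: minimal_set_def)
  ultimately have "closed (minimal_points f)"
    unfolding minimal_points_def by (rule closed_Union)
  then have "x \<in> minimal_points f" using dense_M by simp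
  then obtain M where M: "minimal_set f M" "x \<in> M" unfolding minimal_points_def by blast
  then have "closure (forward_orbit f x) \<subseteq> M"
    by (intro orbit_closure_least) (auto simp: minimal_set_def)
  then have "M = UNIV" using x_tran unfolding Tran_def by auto
  moreover have "M \<subseteq> {0}"
    using \<open>M = UNIV\<close> by (intro minimal_set_subset[OF M(1)]) (auto simp: additive_zero[OF hom])
  ultimately show False using infinite by (metis finite.emptyI finite.insertI finite_subset)
qed

theorem theorem4p3:
  fixes f :: "'a::{metric_space, group_add} \<Rightarrow> 'a"
    and S :: "'a set" and x :: 'a
  assumes compact_X: "compact (UNIV :: 'a set)"
    and infinite_X: "infinite (UNIV :: 'a set)"
    and cont_mult: "continuous_on UNIV (\<lambda>p :: 'a \<times> 'a. fst p + snd p)"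
    and cont_inv: "continuous_on UNIV (uminus :: 'a \<Rightarrow> 'a)"
    and cont_f: "continuous_on UNIV f"
    and hom_f: "\<And>a b. f (a + b) = f a + f b"
    and trans_f: "transitive_map f"
    and dense_M: "closure (minimal_points f) = UNIV"
    and S_scr: "synd_scrambled dist f S"
    and e_in_S: "0 \<in> S"
    and x_tran: "x \<in> Tran f"
  shows "S homeomorphic ((\<lambda>a. a + x) ` S)
       \<and> synd_scrambled dist f ((\<lambda>a. a + x) ` S)
       \<and> (\<forall>(d :: 'a \<Rightarrow> 'a \<Rightarrow> real) \<epsilon>. compatible_metric d \<and> two_sided_invariant d
            \<and> synd_eps_scrambled d f \<epsilon> S \<longrightarrow> synd_eps_scrambled d f \<epsilon> ((\<lambda>a. a + x) ` S))
       \<and> (\<lambda>a. a + x) ` S \<subseteq> Tran f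
       \<and> (\<forall>y \<in> (\<lambda>a. a + x) ` S.
            infinite {M. minimal_set f M \<and> M \<subseteq> closure (forward_orbit f y)})
       \<and> (\<forall>y \<in> (\<lambda>a. a + x) ` S. {z. (y, z) \<in> SProx dist f} \<inter> minimal_points f = {})"
proof -
  have T_tran: "(\<lambda>a. a + x) ` S \<subseteq> Tran f"
  proof
    fix y assume "y \<in> (\<lambda>a. a + x) ` S"
    then obtain a where "a \<in> S" "y = a + x" by blast
    moreover have "(0, a) \<in> SProx dist f" if "a \<noteq> 0"
    proof -
      have "\<forall>u\<in>S. \<forall>v\<in>S. u \<noteq> v \<longrightarrow> (u, v) \<in> SProx dist f - Asy dist f"
        using S_scr unfolding synd_scrambled_def by (rule conjunct2)
      from this[rule_format, OF e_in_S \<open>a \<in> S\<close> not_sym[OF that]] show ?thesis by (rule DiffD1)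
    qed
    ultimately show "y \<in> Tran f"
      using x_tran transitive_right_translation[OF compact_X cont_mult cont_f hom_f dense_M x_tran]
      by (cases "a = 0") auto
  qed
  have infinite_M: "infinite {M. minimal_set f M}"
    by (rule infinitely_many_minimal_sets[OF infinite_X hom_f dense_M x_tran])
  show ?thesis
  proof (intro conjI ballI allI impI)
    show "S homeomorphic (\<lambda>a. a + x) ` S" by (rule homeomorphic_right_translation[OF cont_mult])
    show "synd_scrambled dist f ((\<lambda>a. a + x) ` S)"
      by (rule synd_scrambled_right_translation[OF compact_X cont_mult hom_f S_scr])
    show "synd_eps_scrambled d f \<epsilon> ((\<lambda>a. a + x) ` S)"
      if "compatible_metric d \<and> two_sided_invariant d \<and> synd_eps_scrambled d f \<epsilon> S" for d \<epsilon>
      using that synd_eps_scrambled_right_translation[OF hom_f] by blast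
    show "(\<lambda>a. a + x) ` S \<subseteq> Tran f" by (rule T_tran)
    fix y assume "y \<in> (\<lambda>a. a + x) ` S"
    then have y_tran: "y \<in> Tran f" using T_tran by blast
    then show "infinite {M. minimal_set f M \<and> M \<subseteq> closure (forward_orbit f y)}"
      using infinite_M unfolding Tran_def by simp
    show "{z. (y, z) \<in> SProx dist f} \<inter> minimal_points f = {}"
      by (rule transitive_point_sprox_avoids_minimal_points[OF compact_X cont_f y_tran infinite_M])
  qed
qed

end
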